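(* Let $A\subset\mathbf{Z}_{\geq0}$ be finite with $0\in A$, $N=\#A\geq 2$, $A(x)=\sum_{a\in A}x^a$. Suppose $A(x)$ has a spectrum $\{\theta_1,\dots,\theta_{N-1}\}$ with $\theta_1\notin\mathbf{Q}$. Then $A(x)$ has at least $N-1$ distinct roots $x$ with $|x|\neq 1$.
   Context: A set $\{\theta_1,\dots,\theta_{N-1}\}\subset(0,1)$ is called a spectrum for $A(x)$ if the $\theta_j$ are pairwise distinct and, with $\theta_0=0$, $A(e^{2\pi i(\theta_i-\theta_j)})=0$ for all $0\leq i,j\leq N-1$ with $i\neq j$. *)

theory Defs
  imports "HOL-Analysis.Analysis" "HOL-Computational_Algebra.Polynomial"
begin

definition set_poly :: "nat set \<Rightarrow> complex poly" where
  "set_poly A = (\<Sum>a\<in>A. monom 1 a)"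

text \<open>theta 1, ..., theta (N-1) is a spectrum for A(x), with the convention theta 0 = 0
  (the value of the function theta at 0 is ignored and replaced by 0).\<close>
definition is_spectrum :: "nat set \<Rightarrow> (nat \<Rightarrow> real) \<Rightarrow> bool" where
  "is_spectrum A \<theta> \<longleftrightarrow>
     (let N = card A; th = \<theta>(0 := 0) in
       (\<forall>j\<in>{1..N-1}. 0 < th j \<and> th j < 1) \<and>
       inj_on th {1..N-1} \<and>
       (\<forall>i<N. \<forall>j<N. i \<noteq> j \<longrightarrow>
          poly (set_poly A) (cis (2 * pi * (th i - th j))) = 0))"

end

theory Submission
  imports Defs "HOL-Computational_Algebra.Fundamental_Theorem_Algebra"
begin

text \<open>Put \<open>z\<^sub>j = exp (2 \<pi> i \<theta>\<^sub>j)\<close>, so \<open>z\<^sub>0 = 1\<close> and every quotient \<open>z\<^sub>i / z\<^sub>j\<close> with \<open>i \<noteq> j\<close> is a root of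
  \<open>A(x)\<close>. Since \<open>\<theta>\<^sub>1\<close> is irrational, \<open>z\<^sub>1\<close> is not a root of unity; as it is a root of the monic integer
  polynomial \<open>A(x)\<close>, Kronecker's theorem gives a conjugate \<open>w\<close> of \<open>z\<^sub>1\<close> with \<open>\<bar>w\<bar> > 1\<close>. A field
  embedding \<open>\<sigma>\<close> with \<open>\<sigma> z\<^sub>1 = w\<close>, defined on a field containing all roots of \<open>A(x)\<close>, maps the \<open>z\<^sub>j\<close> to
  \<open>N\<close> distinct numbers \<open>w\<^sub>j\<close> whose quotients are still roots of \<open>A(x)\<close>, and \<open>w\<^sub>0 = 1\<close>, \<open>w\<^sub>1 = w\<close> have
  different moduli. If \<open>a\<close> and \<open>b\<close> are of least and largest modulus among the \<open>w\<^sub>j\<close>, the numbers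
  \<open>w\<^sub>j / a\<close> with \<open>\<bar>w\<^sub>j\<bar> > \<bar>a\<bar>\<close> and \<open>w\<^sub>j / b\<close> with \<open>\<bar>w\<^sub>j\<bar> = \<bar>a\<bar>\<close> are \<open>N\<close> distinct roots off the unit circle.\<close>

section \<open>Subrings, subfields and homomorphisms on them\<close>

definition is_subring :: "'a::comm_ring_1 set \<Rightarrow> bool" where
  "is_subring K \<longleftrightarrow> 0 \<in> K \<and> 1 \<in> K \<and> (\<forall>x\<in>K. \<forall>y\<in>K. x + y \<in> K \<and> x - y \<in> K \<and> x * y \<in> K)"

definition is_subfield :: "'a::field set \<Rightarrow> bool" where
  "is_subfield K \<longleftrightarrow> is_subring K \<and> (\<forall>x\<in>K. inverse x \<in> K)"

definition hom_on :: "'a::comm_ring_1 set \<Rightarrow> ('a \<Rightarrow> 'b::comm_ring_1) \<Rightarrow> bool" where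
  "hom_on K \<sigma> \<longleftrightarrow> \<sigma> 1 = 1 \<and> (\<forall>x\<in>K. \<forall>y\<in>K. \<sigma> (x + y) = \<sigma> x + \<sigma> y \<and> \<sigma> (x * y) = \<sigma> x * \<sigma> y)"

context
  fixes K :: "'a::comm_ring_1 set"
  assumes K: "is_subring K"
begin

lemma subring_0: "0 \<in> K" and subring_1: "1 \<in> K"
  and subring_add: "x \<in> K \<Longrightarrow> y \<in> K \<Longrightarrow> x + y \<in> K"
  and subring_diff: "x \<in> K \<Longrightarrow> y \<in> K \<Longrightarrow> x - y \<in> K"
  and subring_mult: "x \<in> K \<Longrightarrow> y \<in> K \<Longrightarrow> x * y \<in> K"
  using K by (auto simp: is_subring_def)

lemma subring_uminus: "x \<in> K \<Longrightarrow> - x \<in> K"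
  using subring_diff[OF subring_0] by simp

lemma subring_sum: "(\<And>i. i \<in> S \<Longrightarrow> f i \<in> K) \<Longrightarrow> sum f S \<in> K"
  by (induction S rule: infinite_finite_induct) (auto intro: subring_0 subring_add)

lemma subring_of_nat: "of_nat n \<in> K"
  by (induction n) (auto intro: subring_0 subring_1 subring_add)

lemma subring_of_int: "of_int n \<in> K"
proof (cases "n \<ge> 0")
  case True
  then show ?thesis using subring_of_nat[of "nat n"] by simp
next
  case False
  then show ?thesis using subring_uminus[OF subring_of_nat[of "nat (- n)"]] by simp
qed

end

context
  fixes K :: "'a::comm_ring_1 set" and \<sigma> :: "'a \<Rightarrow> 'b::comm_ring_1"
  assumes K: "is_subring K" and \<sigma>: "hom_on K \<sigma>"
begin

lemma hom_on_1: "\<sigma> 1 = 1"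
  and hom_on_add: "x \<in> K \<Longrightarrow> y \<in> K \<Longrightarrow> \<sigma> (x + y) = \<sigma> x + \<sigma> y"
  and hom_on_mult: "x \<in> K \<Longrightarrow> y \<in> K \<Longrightarrow> \<sigma> (x * y) = \<sigma> x * \<sigma> y"
  using \<sigma> by (auto simp: hom_on_def)

lemma hom_on_0: "\<sigma> 0 = 0"
  using hom_on_add[OF subring_0[OF K] subring_0[OF K]] by simp

lemma hom_on_uminus: "x \<in> K \<Longrightarrow> \<sigma> (- x) = - \<sigma> x"
  using hom_on_add[OF _ subring_uminus[OF K]] hom_on_0 by (metis add.right_inverse neg_eq_iff_add_eq_0)

lemma hom_on_diff: "x \<in> K \<Longrightarrow> y \<in> K \<Longrightarrow> \<sigma> (x - y) = \<sigma> x - \<sigma> y"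
  using hom_on_add[OF _ subring_uminus[OF K]] hom_on_uminus by simp

lemma hom_on_sum: "(\<And>i. i \<in> S \<Longrightarrow> f i \<in> K) \<Longrightarrow> \<sigma> (sum f S) = (\<Sum>i\<in>S. \<sigma> (f i))"
  by (induction S rule: infinite_finite_induct) (simp_all add: hom_on_0 hom_on_add subring_sum[OF K])

lemma hom_on_of_nat: "\<sigma> (of_nat n) = of_nat n"
  by (induction n) (simp_all add: hom_on_0 hom_on_1 hom_on_add subring_1[OF K] subring_of_nat[OF K])

lemma hom_on_of_int: "\<sigma> (of_int n) = of_int n"
  by (metis hom_on_of_nat hom_on_uminus int_cases2 of_int_minus of_int_of_nat_eq subring_of_nat[OF K])

end

lemma subfield_is_subring: "is_subfield K \<Longrightarrow> is_subring K"
  and subfield_inverse: "is_subfield K \<Longrightarrow> x \<in> K \<Longrightarrow> inverse x \<in> K"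
  by (simp_all add: is_subfield_def)

lemma subfield_divide: "is_subfield K \<Longrightarrow> x \<in> K \<Longrightarrow> y \<in> K \<Longrightarrow> x / y \<in> K"
  by (simp add: divide_inverse subfield_inverse subring_mult subfield_is_subring)

lemma Rats_subset_subfield:
  fixes K :: "'a::field_char_0 set"
  shows "is_subfield K \<Longrightarrow> \<rat> \<subseteq> K"
  by (auto elim!: Rats_cases' intro: subfield_divide subring_of_int subfield_is_subring)

lemma is_subring_Ints: "is_subring (\<int> :: 'a::comm_ring_1 set)"
  by (auto simp: is_subring_def)

lemma is_subfield_Rats: "is_subfield (\<rat> :: 'a::field_char_0 set)"
  by (auto simp: is_subfield_def is_subring_def)

lemma hom_on_id: "hom_on K id"
  by (simp add: hom_on_def)

context
  fixes K :: "'a::field set" and \<sigma> :: "'a \<Rightarrow> 'b::field"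
  assumes K: "is_subfield K" and \<sigma>: "hom_on K \<sigma>"
begin

lemma hom_on_inverse: "x \<in> K \<Longrightarrow> \<sigma> (inverse x) = inverse (\<sigma> x)"
  using hom_on_mult[OF subfield_is_subring[OF K] \<sigma> _ subfield_inverse[OF K]]
    hom_on_0[OF subfield_is_subring[OF K] \<sigma>] hom_on_1[OF subfield_is_subring[OF K] \<sigma>]
  by (metis inverse_unique right_inverse inverse_zero)

lemma hom_on_divide: "x \<in> K \<Longrightarrow> y \<in> K \<Longrightarrow> \<sigma> (x / y) = \<sigma> x / \<sigma> y"
  by (simp add: divide_inverse hom_on_inverse subfield_inverse[OF K]
      hom_on_mult[OF subfield_is_subring[OF K] \<sigma>])

lemma hom_on_eq_0_iff: "x \<in> K \<Longrightarrow> \<sigma> x = 0 \<longleftrightarrow> x = 0"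
  using hom_on_mult[OF subfield_is_subring[OF K] \<sigma> _ subfield_inverse[OF K]]
    hom_on_0[OF subfield_is_subring[OF K] \<sigma>] hom_on_1[OF subfield_is_subring[OF K] \<sigma>]
  by (metis mult_zero_left right_inverse zero_neq_one)

lemma hom_on_inj: "inj_on \<sigma> K"
  by (rule inj_onI) (metis eq_iff_diff_eq_0 hom_on_diff[OF subfield_is_subring[OF K] \<sigma>]
      hom_on_eq_0_iff subring_diff[OF subfield_is_subring[OF K]])

end

lemma hom_on_Rats:
  fixes K :: "'a::field_char_0 set"
  assumes "is_subfield K" "hom_on K \<sigma>" "x \<in> \<rat>"
  shows "\<sigma> x = x"
  using assms(3)
  by (auto elim!: Rats_cases' simp: hom_on_divide[OF assms(1,2)] subring_of_int
      hom_on_of_int[OF subfield_is_subring, OF assms(1,2)] subfield_is_subring[OF assms(1)])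

section \<open>Polynomials with coefficients in a subring\<close>

definition poly_over :: "'a::comm_ring_1 set \<Rightarrow> 'a poly \<Rightarrow> bool" where
  "poly_over K p \<longleftrightarrow> (\<forall>i. coeff p i \<in> K)"

lemma poly_over_pCons: "poly_over K (pCons a p) \<longleftrightarrow> a \<in> K \<and> poly_over K p"
  unfolding poly_over_def by (metis coeff_pCons_0 coeff_pCons_Suc not0_implies_Suc)

lemma poly_over_mono: "K \<subseteq> L \<Longrightarrow> poly_over K p \<Longrightarrow> poly_over L p"
  by (auto simp: poly_over_def)

lemma cancel_leading_term:
  fixes p d :: "'a::comm_ring_1 poly"
  assumes "u * lead_coeff d = 1" "degree d \<le> degree p"
  defines "r \<equiv> p - monom (lead_coeff p * u) (degree p - degree d) * d"
  shows "r = 0 \<or> degree r < degree p"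
proof -
  have "coeff r n = 0" if "n \<ge> degree p" for n
  proof (cases "n = degree p")
    case True
    then have "coeff (monom (lead_coeff p * u) (degree p - degree d) * d) n = lead_coeff p * (u * lead_coeff d)"
      using assms(2) by (simp add: coeff_monom_mult mult.assoc)
    then show ?thesis using True assms(1) by (simp add: r_def)
  next
    case False
    then show ?thesis using that assms(2) by (simp add: r_def coeff_monom_mult coeff_eq_0)
  qed
  then show ?thesis by (metis leading_coeff_0_iff not_le)
qed

context
  fixes K :: "'a::comm_ring_1 set"
  assumes K: "is_subring K"
begin

lemma poly_over_0: "poly_over K 0"
  by (simp add: poly_over_def subring_0[OF K])

lemma poly_over_const: "c \<in> K \<Longrightarrow> poly_over K [:c:]"
  by (simp add: poly_over_pCons poly_over_0)

lemma poly_over_1: "poly_over K 1"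
  by (simp add: one_pCons poly_over_const subring_1[OF K])

lemma poly_over_monom: "c \<in> K \<Longrightarrow> poly_over K (monom c n)"
  by (simp add: poly_over_def coeff_monom subring_0[OF K])

lemma poly_over_add: "poly_over K p \<Longrightarrow> poly_over K q \<Longrightarrow> poly_over K (p + q)"
  by (simp add: poly_over_def subring_add[OF K])

lemma poly_over_diff: "poly_over K p \<Longrightarrow> poly_over K q \<Longrightarrow> poly_over K (p - q)"
  by (simp add: poly_over_def subring_diff[OF K])

lemma poly_over_smult: "c \<in> K \<Longrightarrow> poly_over K p \<Longrightarrow> poly_over K (smult c p)"
  by (simp add: poly_over_def subring_mult[OF K])

lemma poly_over_mult: "poly_over K p \<Longrightarrow> poly_over K q \<Longrightarrow> poly_over K (p * q)"
  by (simp add: poly_over_def coeff_mult subring_sum[OF K] subring_mult[OF K])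

lemma poly_over_sum: "(\<And>i. i \<in> S \<Longrightarrow> poly_over K (f i)) \<Longrightarrow> poly_over K (sum f S)"
  by (simp add: poly_over_def coeff_sum subring_sum[OF K])

lemma poly_in_subring: "poly_over K p \<Longrightarrow> x \<in> K \<Longrightarrow> poly p x \<in> K"
  by (induction p) (auto simp: poly_over_pCons subring_0[OF K] subring_add[OF K] subring_mult[OF K])

lemma poly_over_div_mod:
  assumes d: "poly_over K d" "u \<in> K" "u * lead_coeff d = 1" and p: "poly_over K p"
  shows "\<exists>q r. poly_over K q \<and> poly_over K r \<and> p = q * d + r \<and> (r = 0 \<or> degree r < degree d)"
  using p
proof (induction "degree p" arbitrary: p rule: less_induct)
  case less
  show ?case
  proof (cases "p = 0 \<or> degree p < degree d")
    case True
    then show ?thesis using less.prems poly_over_0 by (intro exI[of _ 0] exI[of _ p]) auto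
  next
    case False
    hence deg: "degree d \<le> degree p" by auto
    define m where "m = monom (lead_coeff p * u) (degree p - degree d)"
    have m: "poly_over K m"
      unfolding m_def using less.prems d by (intro poly_over_monom subring_mult[OF K]) (auto simp: poly_over_def)
    have p': "poly_over K (p - m * d)" using less.prems m d by (intro poly_over_diff poly_over_mult)
    have "p - m * d = 0 \<or> degree (p - m * d) < degree p"
      unfolding m_def using cancel_leading_term[OF d(3) deg] .
    then show ?thesis
    proof
      assume "p - m * d = 0"
      then show ?thesis using m poly_over_0 by (intro exI[of _ m] exI[of _ 0]) auto
    next
      assume "degree (p - m * d) < degree p"
      from less.hyps[OF this p'] obtain q r where
        qr: "poly_over K q" "poly_over K r" "p - m * d = q * d + r" "r = 0 \<or> degree r < degree d"
        by blast
      then have "p = (q + m) * d + r" by (simp add: algebra_simps)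
      then show ?thesis using qr m by (intro exI[of _ "q + m"] exI[of _ r]) (auto intro: poly_over_add)
    qed
  qed
qed

lemma poly_over_power_remainder:
  assumes d: "poly_over K d" "u \<in> K" "u * lead_coeff d = 1" "degree d \<noteq> 0"
  shows "\<exists>r. poly_over K r \<and> degree r < degree d \<and> (\<forall>x. poly d x = 0 \<longrightarrow> poly r x = x ^ k)"
proof -
  from poly_over_div_mod[OF d(1-3) poly_over_monom[OF subring_1[OF K]], of k]
  obtain q r where "poly_over K r" and qr: "monom 1 k = q * d + r" and "r = 0 \<or> degree r < degree d"
    by blast
  moreover have "poly r x = x ^ k" if "poly d x = 0" for x
    using arg_cong[OF qr, of "\<lambda>p. poly p x"] that by (simp add: poly_monom)
  ultimately show ?thesis using d(4) by (intro exI[of _ r]) auto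
qed

end

lemma poly_over_pderiv:
  fixes K :: "'a::idom set"
  shows "is_subring K \<Longrightarrow> poly_over K p \<Longrightarrow> poly_over K (pderiv p)"
  by (auto simp: poly_over_def coeff_pderiv simp del: of_nat_Suc intro!: subring_mult subring_of_nat)

context
  fixes K :: "'a::comm_ring_1 set" and \<sigma> :: "'a \<Rightarrow> 'b::comm_ring_1"
  assumes K: "is_subring K" and \<sigma>: "hom_on K \<sigma>"
begin

lemma coeff_map_poly_hom_on: "coeff (map_poly \<sigma> p) i = \<sigma> (coeff p i)"
  by (simp add: coeff_map_poly hom_on_0[OF K \<sigma>])

lemma map_poly_hom_on_add:
  "poly_over K p \<Longrightarrow> poly_over K q \<Longrightarrow> map_poly \<sigma> (p + q) = map_poly \<sigma> p + map_poly \<sigma> q"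
  by (intro poly_eqI) (simp add: coeff_map_poly_hom_on hom_on_add[OF K \<sigma>] poly_over_def)

lemma map_poly_hom_on_diff:
  "poly_over K p \<Longrightarrow> poly_over K q \<Longrightarrow> map_poly \<sigma> (p - q) = map_poly \<sigma> p - map_poly \<sigma> q"
  by (intro poly_eqI) (simp add: coeff_map_poly_hom_on hom_on_diff[OF K \<sigma>] poly_over_def)

lemma map_poly_hom_on_mult:
  assumes "poly_over K p" "poly_over K q"
  shows "map_poly \<sigma> (p * q) = map_poly \<sigma> p * map_poly \<sigma> q"
proof (intro poly_eqI)
  fix n
  have "coeff (map_poly \<sigma> (p * q)) n = (\<Sum>i\<le>n. \<sigma> (coeff p i * coeff q (n - i)))"
    using assms by (simp add: coeff_map_poly_hom_on coeff_mult poly_over_def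
        hom_on_sum[OF K \<sigma>] subring_mult[OF K])
  also have "\<dots> = coeff (map_poly \<sigma> p * map_poly \<sigma> q) n"
    using assms by (simp add: coeff_map_poly_hom_on coeff_mult poly_over_def hom_on_mult[OF K \<sigma>])
  finally show "coeff (map_poly \<sigma> (p * q)) n = coeff (map_poly \<sigma> p * map_poly \<sigma> q) n" .
qed

lemma map_poly_hom_on_monom: "map_poly \<sigma> (monom c n) = monom (\<sigma> c) n"
  by (intro poly_eqI) (simp add: coeff_map_poly_hom_on coeff_monom hom_on_0[OF K \<sigma>])

lemma map_poly_hom_on_const: "map_poly \<sigma> [:c:] = [:\<sigma> c:]"
  using map_poly_hom_on_monom[of c 0] by (simp add: monom_0)

lemma poly_map_poly_hom_on:
  assumes "x \<in> K"
  shows "poly_over K p \<Longrightarrow> poly (map_poly \<sigma> p) (\<sigma> x) = \<sigma> (poly p x)"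
  by (induction p) (auto simp: poly_over_pCons map_poly_pCons hom_on_0[OF K \<sigma>] assms
      hom_on_add[OF K \<sigma>] hom_on_mult[OF K \<sigma>] subring_mult[OF K] poly_in_subring[OF K])

end

lemma degree_map_poly_hom_on:
  fixes K :: "'a::field set" and \<sigma> :: "'a \<Rightarrow> 'b::field"
  assumes K: "is_subfield K" and \<sigma>: "hom_on K \<sigma>" and p: "poly_over K p"
  shows "degree (map_poly \<sigma> p) = degree p"
proof (cases "p = 0")
  case False
  then show ?thesis
    using p hom_on_eq_0_iff[OF K \<sigma>] by (intro map_poly_degree_eq) (auto simp: poly_over_def)
qed simp

context
  fixes K :: "'a::field_char_0 set" and \<sigma> :: "'a \<Rightarrow> 'a"
  assumes K: "is_subfield K" and \<sigma>: "hom_on K \<sigma>"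
begin

lemma map_poly_hom_on_Rats: "poly_over \<rat> p \<Longrightarrow> map_poly \<sigma> p = p"
  by (intro poly_eqI)
    (simp add: coeff_map_poly_hom_on[OF subfield_is_subring[OF K] \<sigma>] hom_on_Rats[OF K \<sigma>] poly_over_def)

lemma hom_on_poly_Rats:
  assumes "poly_over \<rat> p" "x \<in> K"
  shows "\<sigma> (poly p x) = poly p (\<sigma> x)"
proof -
  have "poly_over K p" using poly_over_mono[OF Rats_subset_subfield[OF K] assms(1)] .
  then have "\<sigma> (poly p x) = poly (map_poly \<sigma> p) (\<sigma> x)"
    using poly_map_poly_hom_on[OF subfield_is_subring[OF K] \<sigma> assms(2)] by simp
  then show ?thesis using map_poly_hom_on_Rats[OF assms(1)] by simp
qed

end

section \<open>Minimal polynomials and conjugates\<close>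

definition is_min_poly :: "'a::field set \<Rightarrow> 'a \<Rightarrow> 'a poly \<Rightarrow> bool" where
  "is_min_poly K \<alpha> p \<longleftrightarrow> poly_over K p \<and> p \<noteq> 0 \<and> poly p \<alpha> = 0 \<and>
     (\<forall>q. poly_over K q \<and> q \<noteq> 0 \<and> poly q \<alpha> = 0 \<longrightarrow> degree p \<le> degree q)"

lemma min_poly_exists:
  assumes "poly_over K p" "p \<noteq> 0" "poly p \<alpha> = 0"
  shows "\<exists>mp. is_min_poly K \<alpha> mp"
proof -
  let ?P = "\<lambda>n. \<exists>p. poly_over K p \<and> p \<noteq> 0 \<and> poly p \<alpha> = 0 \<and> degree p = n"
  obtain n where n: "?P n" "\<And>m. m < n \<Longrightarrow> \<not> ?P m"
    using assms exists_least_iff[of ?P] by blast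
  then obtain p where "poly_over K p" "p \<noteq> 0" "poly p \<alpha> = 0" "degree p = n" by blast
  then show ?thesis using n(2) unfolding is_min_poly_def by (metis not_le)
qed

lemma min_poly_degree_pos: "is_min_poly K \<alpha> mp \<Longrightarrow> degree mp \<noteq> 0"
  by (metis degree_eq_zeroE is_min_poly_def pCons_0_0 poly_const_conv)

lemma subfield_lead_coeff_unit:
  "is_subfield K \<Longrightarrow> poly_over K p \<Longrightarrow> p \<noteq> 0 \<Longrightarrow>
    inverse (lead_coeff p) \<in> K \<and> inverse (lead_coeff p) * lead_coeff p = 1"
  by (simp add: poly_over_def subfield_inverse)

context
  fixes K :: "'a::field set" and \<alpha> :: 'a and mp :: "'a poly"
  assumes K: "is_subfield K" and mp: "is_min_poly K \<alpha> mp"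
begin

lemma min_poly_dvd:
  assumes "poly_over K q" "poly q \<alpha> = 0"
  shows "\<exists>s. poly_over K s \<and> q = s * mp"
proof -
  have mp_K: "poly_over K mp" "mp \<noteq> 0" using mp by (auto simp: is_min_poly_def)
  obtain s r where sr: "poly_over K s" "poly_over K r" "q = s * mp + r" "r = 0 \<or> degree r < degree mp"
    using poly_over_div_mod[OF subfield_is_subring[OF K] mp_K(1) _ _ assms(1)]
      subfield_lead_coeff_unit[OF K mp_K] by blast
  have "poly r \<alpha> = 0" using sr(3) assms(2) mp by (simp add: is_min_poly_def)
  then have "r = 0" using sr(2,4) mp unfolding is_min_poly_def by (meson not_le)
  then show ?thesis using sr by auto
qed

lemma min_poly_unique_remainder:
  assumes "poly_over K f" "poly_over K g" "degree f < degree mp" "degree g < degree mp"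
    and "poly f \<alpha> = poly g \<alpha>"
  shows "f = g"
proof (rule ccontr)
  assume "f \<noteq> g"
  moreover have "degree (f - g) < degree mp"
    using assms(3,4) degree_diff_le_max[of f g] by linarith
  moreover have "poly_over K (f - g)"
    using poly_over_diff[OF subfield_is_subring[OF K] assms(1,2)] .
  ultimately show False
    using mp assms(5) unfolding is_min_poly_def by (metis eq_iff_diff_eq_0 not_le poly_diff)
qed

end

lemma map_poly_root_ideal_principal:
  fixes K :: "'a::field set" and \<sigma> :: "'a \<Rightarrow> 'b::field"
  assumes K: "is_subfield K" and \<sigma>: "hom_on K \<sigma>"
    and h0: "poly_over K h0" "h0 \<noteq> 0" "poly (map_poly \<sigma> h0) \<beta> = 0"
  obtains g where "poly_over K g" "g \<noteq> 0" "poly (map_poly \<sigma> g) \<beta> = 0"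
    "\<And>h. poly_over K h \<Longrightarrow> poly (map_poly \<sigma> h) \<beta> = 0 \<Longrightarrow> \<exists>s. poly_over K s \<and> h = s * g"
proof -
  have R: "is_subring K" using K by (rule subfield_is_subring)
  let ?I = "\<lambda>n. \<exists>h. poly_over K h \<and> h \<noteq> 0 \<and> poly (map_poly \<sigma> h) \<beta> = 0 \<and> degree h = n"
  obtain n where n: "?I n" "\<And>k. k < n \<Longrightarrow> \<not> ?I k"
    using h0 exists_least_iff[of ?I] by blast
  then obtain g where g: "poly_over K g" "g \<noteq> 0" "poly (map_poly \<sigma> g) \<beta> = 0" "degree g = n"
    by blast
  have "\<exists>s. poly_over K s \<and> h = s * g"
    if h: "poly_over K h" "poly (map_poly \<sigma> h) \<beta> = 0" for h
  proof -
    obtain s r where sr: "poly_over K s" "poly_over K r" "h = s * g + r" "r = 0 \<or> degree r < degree g"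
      using poly_over_div_mod[OF R g(1) _ _ h(1)] subfield_lead_coeff_unit[OF K g(1,2)] by blast
    have "map_poly \<sigma> h = map_poly \<sigma> s * map_poly \<sigma> g + map_poly \<sigma> r"
      using sr map_poly_hom_on_add[OF R \<sigma> poly_over_mult[OF R sr(1) g(1)] sr(2)]
        map_poly_hom_on_mult[OF R \<sigma> sr(1) g(1)] by simp
    then have "poly (map_poly \<sigma> r) \<beta> = 0" using h(2) g(3) by simp
    then have "r = 0" using sr(2,4) n(2) g(4) by blast
    then show ?thesis using sr by auto
  qed
  with g that show ?thesis by blast
qed

text \<open>If \<open>(\<sigma> q)(\<beta>) = 0\<close>, the generator of the ideal of polynomials vanishing at \<open>\<beta>\<close> after applying
  \<open>\<sigma>\<close> divides both \<open>mp\<close> and \<open>q\<close>; since \<open>q(\<alpha>) \<noteq> 0\<close>, the minimality of \<open>mp\<close> forces it to be constant.\<close>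

lemma poly_map_nonzero_at_conjugate:
  fixes K :: "'a::field set" and \<sigma> :: "'a \<Rightarrow> 'b::field"
  assumes K: "is_subfield K" and \<sigma>: "hom_on K \<sigma>" and mp: "is_min_poly K \<alpha> mp"
    and \<beta>: "poly (map_poly \<sigma> mp) \<beta> = 0" and q: "poly_over K q" "poly q \<alpha> \<noteq> 0"
  shows "poly (map_poly \<sigma> q) \<beta> \<noteq> 0"
proof
  assume q\<beta>: "poly (map_poly \<sigma> q) \<beta> = 0"
  have mp_K: "poly_over K mp" "mp \<noteq> 0" "poly mp \<alpha> = 0" using mp by (auto simp: is_min_poly_def)
  obtain g where g: "poly_over K g" "g \<noteq> 0" "poly (map_poly \<sigma> g) \<beta> = 0"
    and g_dvd: "\<And>h. poly_over K h \<Longrightarrow> poly (map_poly \<sigma> h) \<beta> = 0 \<Longrightarrow> \<exists>s. poly_over K s \<and> h = s * g"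
    using map_poly_root_ideal_principal[OF K \<sigma> mp_K(1,2) \<beta>] by blast
  obtain s where s: "poly_over K s" "mp = s * g" using g_dvd[OF mp_K(1) \<beta>] by blast
  obtain t where t: "q = t * g" using g_dvd[OF q(1) q\<beta>] by blast
  have "poly s \<alpha> = 0" using s(2) t q(2) mp_K(3) by auto
  moreover have "s \<noteq> 0" using s mp_K(2) by auto
  ultimately have "degree mp \<le> degree s" using mp s(1) by (auto simp: is_min_poly_def)
  moreover have "degree mp = degree s + degree g" using s mp_K(2) by (simp add: degree_mult_eq)
  ultimately obtain c where c: "g = [:c:]" by (metis add_le_same_cancel1 le_zero_eq degree_eq_zeroE)
  then have "c \<in> K" "c \<noteq> 0" using g(1,2) by (auto simp: poly_over_pCons)
  then show False
    using g(3) c by (simp add: map_poly_hom_on_const[OF subfield_is_subring[OF K] \<sigma>] hom_on_eq_0_iff[OF K \<sigma>])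
qed

lemma rsquarefree_min_poly:
  fixes K :: "'a::field_char_0 set"
  assumes K: "is_subfield K" and mp: "is_min_poly K \<alpha> mp"
  shows "rsquarefree mp"
  unfolding rsquarefree_roots
proof (intro allI notI)
  fix \<beta> assume \<beta>: "poly mp \<beta> = 0 \<and> poly (pderiv mp) \<beta> = 0"
  have mp_K: "poly_over K mp" using mp by (simp add: is_min_poly_def)
  have d: "poly_over K (pderiv mp)" using poly_over_pderiv[OF subfield_is_subring[OF K] mp_K] .
  have "degree mp \<noteq> 0" using min_poly_degree_pos[OF mp] .
  then have "pderiv mp \<noteq> 0" "degree (pderiv mp) < degree mp"
    by (simp_all add: pderiv_eq_0_iff degree_pderiv)
  then have "poly (pderiv mp) \<alpha> \<noteq> 0" using mp d by (auto simp: is_min_poly_def)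
  then show False
    using poly_map_nonzero_at_conjugate[OF K hom_on_id mp _ d, of \<beta>] \<beta> by (simp add: map_poly_id)
qed

definition simple_ext :: "'a::field set \<Rightarrow> 'a \<Rightarrow> 'a set" where
  "simple_ext K \<alpha> = {poly p \<alpha> / poly q \<alpha> | p q. poly_over K p \<and> poly_over K q \<and> poly q \<alpha> \<noteq> 0}"

context
  fixes K :: "'a::field set" and \<alpha> :: 'a
  assumes K: "is_subring K"
begin

lemma subset_simple_ext: "K \<subseteq> simple_ext K \<alpha>"
proof
  fix x assume "x \<in> K"
  then have "x = poly [:x:] \<alpha> / poly 1 \<alpha>" "poly_over K [:x:]" "poly_over K 1"
    by (simp_all add: poly_over_const[OF K] poly_over_1[OF K])
  then show "x \<in> simple_ext K \<alpha>" unfolding simple_ext_def by force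
qed

lemma mem_simple_ext: "\<alpha> \<in> simple_ext K \<alpha>"
proof -
  have "\<alpha> = poly (monom 1 1) \<alpha> / poly 1 \<alpha>" "poly_over K (monom 1 1)" "poly_over K 1"
    by (simp_all add: poly_monom poly_over_monom[OF K subring_1[OF K]] poly_over_1[OF K])
  then show ?thesis unfolding simple_ext_def by force
qed

lemma is_subfield_simple_ext: "is_subfield (simple_ext K \<alpha>)"
  unfolding is_subfield_def is_subring_def
proof (intro conjI ballI)
  show "0 \<in> simple_ext K \<alpha>" "1 \<in> simple_ext K \<alpha>"
    using subset_simple_ext subring_0[OF K] subring_1[OF K] by auto
next
  fix x y assume "x \<in> simple_ext K \<alpha>" "y \<in> simple_ext K \<alpha>"
  then obtain p1 q1 p2 q2 where
    x: "x = poly p1 \<alpha> / poly q1 \<alpha>" "poly_over K p1" "poly_over K q1" "poly q1 \<alpha> \<noteq> 0" and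
    y: "y = poly p2 \<alpha> / poly q2 \<alpha>" "poly_over K p2" "poly_over K q2" "poly q2 \<alpha> \<noteq> 0"
    unfolding simple_ext_def by blast
  have "x + y = poly (p1 * q2 + p2 * q1) \<alpha> / poly (q1 * q2) \<alpha>"
    "x - y = poly (p1 * q2 - p2 * q1) \<alpha> / poly (q1 * q2) \<alpha>"
    "x * y = poly (p1 * p2) \<alpha> / poly (q1 * q2) \<alpha>"
    using x(4) y(4) by (simp_all add: x(1) y(1) field_simps)
  moreover have "poly_over K (p1 * q2 + p2 * q1)" "poly_over K (p1 * q2 - p2 * q1)"
    "poly_over K (p1 * p2)" "poly_over K (q1 * q2)" "poly (q1 * q2) \<alpha> \<noteq> 0"
    using x y by (simp_all add: poly_over_add[OF K] poly_over_diff[OF K] poly_over_mult[OF K])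
  ultimately show "x + y \<in> simple_ext K \<alpha>" "x - y \<in> simple_ext K \<alpha>" "x * y \<in> simple_ext K \<alpha>"
    unfolding simple_ext_def by blast+
next
  fix x assume "x \<in> simple_ext K \<alpha>"
  then obtain p q where x: "x = poly p \<alpha> / poly q \<alpha>" "poly_over K p" "poly_over K q" "poly q \<alpha> \<noteq> 0"
    unfolding simple_ext_def by blast
  show "inverse x \<in> simple_ext K \<alpha>"
  proof (cases "poly p \<alpha> = 0")
    case True
    then show ?thesis using x subset_simple_ext subring_0[OF K] by auto
  next
    case False
    then have "inverse x = poly q \<alpha> / poly p \<alpha>" using x by simp
    then show ?thesis using x False unfolding simple_ext_def by blast
  qed
qed

end

definition ext_hom :: "'a::field set \<Rightarrow> ('a \<Rightarrow> 'b::field) \<Rightarrow> 'a \<Rightarrow> 'b \<Rightarrow> 'a \<Rightarrow> 'b" where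
  "ext_hom K \<sigma> \<alpha> \<beta> x = (SOME v. \<exists>p q. poly_over K p \<and> poly_over K q \<and> poly q \<alpha> \<noteq> 0 \<and>
     x = poly p \<alpha> / poly q \<alpha> \<and> v = poly (map_poly \<sigma> p) \<beta> / poly (map_poly \<sigma> q) \<beta>)"

context
  fixes K :: "'a::field set" and \<sigma> :: "'a \<Rightarrow> 'b::field" and \<alpha> :: 'a and \<beta> :: 'b and mp :: "'a poly"
  assumes K: "is_subfield K" and \<sigma>: "hom_on K \<sigma>" and mp: "is_min_poly K \<alpha> mp"
    and \<beta>: "poly (map_poly \<sigma> mp) \<beta> = 0"
begin

private lemma K_subring: "is_subring K"
  using K by (rule subfield_is_subring)

private lemma eval_add: "poly_over K p \<Longrightarrow> poly_over K q \<Longrightarrow>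
    poly (map_poly \<sigma> (p + q)) \<beta> = poly (map_poly \<sigma> p) \<beta> + poly (map_poly \<sigma> q) \<beta>"
  and eval_diff: "poly_over K p \<Longrightarrow> poly_over K q \<Longrightarrow>
    poly (map_poly \<sigma> (p - q)) \<beta> = poly (map_poly \<sigma> p) \<beta> - poly (map_poly \<sigma> q) \<beta>"
  and eval_mult: "poly_over K p \<Longrightarrow> poly_over K q \<Longrightarrow>
    poly (map_poly \<sigma> (p * q)) \<beta> = poly (map_poly \<sigma> p) \<beta> * poly (map_poly \<sigma> q) \<beta>"
  by (simp_all add: map_poly_hom_on_add[OF K_subring \<sigma>] map_poly_hom_on_diff[OF K_subring \<sigma>] map_poly_hom_on_mult[OF K_subring \<sigma>])

lemma ext_hom_fraction:
  assumes p: "poly_over K p" and q: "poly_over K q" "poly q \<alpha> \<noteq> 0"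
  shows "ext_hom K \<sigma> \<alpha> \<beta> (poly p \<alpha> / poly q \<alpha>) = poly (map_poly \<sigma> p) \<beta> / poly (map_poly \<sigma> q) \<beta>"
proof -
  let ?ev = "\<lambda>p. poly (map_poly \<sigma> p) \<beta>"
  have well_defined: "?ev p' / ?ev q' = ?ev p / ?ev q"
    if p': "poly_over K p'" and q': "poly_over K q'" "poly q' \<alpha> \<noteq> 0"
      and eq: "poly p \<alpha> / poly q \<alpha> = poly p' \<alpha> / poly q' \<alpha>" for p' q'
  proof -
    have h: "poly_over K (p' * q - p * q')"
      using p q p' q' by (intro poly_over_diff[OF K_subring] poly_over_mult[OF K_subring])
    have "poly (p' * q - p * q') \<alpha> = 0" using eq q q' by (simp add: field_simps)
    then obtain s where "poly_over K s" "p' * q - p * q' = s * mp" using min_poly_dvd[OF K mp h] by blast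
    then have "?ev (p' * q - p * q') = 0"
      using mp \<beta> by (simp add: map_poly_hom_on_mult[OF K_subring \<sigma>] is_min_poly_def)
    moreover have "?ev q \<noteq> 0" "?ev q' \<noteq> 0"
      using poly_map_nonzero_at_conjugate[OF K \<sigma> mp \<beta>] q q' by auto
    ultimately show ?thesis using p q p' q' by (simp add: eval_diff eval_mult poly_over_mult[OF K_subring] field_simps)
  qed
  let ?P = "\<lambda>v. \<exists>p' q'. poly_over K p' \<and> poly_over K q' \<and> poly q' \<alpha> \<noteq> 0 \<and>
     poly p \<alpha> / poly q \<alpha> = poly p' \<alpha> / poly q' \<alpha> \<and> v = ?ev p' / ?ev q'"
  have "?P (?ev p / ?ev q)" using p q by blast
  then have "?P (SOME v. ?P v)" by (rule someI)
  with well_defined show ?thesis unfolding ext_hom_def by force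
qed

lemma ext_hom_extends: "x \<in> K \<Longrightarrow> ext_hom K \<sigma> \<alpha> \<beta> x = \<sigma> x"
  using ext_hom_fraction[OF poly_over_const[OF K_subring] poly_over_1[OF K_subring], of x]
  by (simp add: map_poly_hom_on_const[OF K_subring \<sigma>] map_poly_hom_on_const[OF K_subring \<sigma>, of 1, folded one_pCons]
      hom_on_1[OF K_subring \<sigma>])

lemma ext_hom_root: "ext_hom K \<sigma> \<alpha> \<beta> \<alpha> = \<beta>"
  using ext_hom_fraction[OF poly_over_monom[OF K_subring subring_1[OF K_subring]] poly_over_1[OF K_subring], of 1]
  by (simp add: poly_monom map_poly_hom_on_monom[OF K_subring \<sigma>] map_poly_hom_on_const[OF K_subring \<sigma>, of 1, folded one_pCons]
      hom_on_1[OF K_subring \<sigma>])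

lemma hom_on_ext_hom: "hom_on (simple_ext K \<alpha>) (ext_hom K \<sigma> \<alpha> \<beta>)"
  unfolding hom_on_def
proof (intro conjI ballI)
  show "ext_hom K \<sigma> \<alpha> \<beta> 1 = 1"
    using ext_hom_extends[OF subring_1[OF K_subring]] hom_on_1[OF K_subring \<sigma>] by simp
next
  let ?ev = "\<lambda>p. poly (map_poly \<sigma> p) \<beta>"
  fix x y assume "x \<in> simple_ext K \<alpha>" "y \<in> simple_ext K \<alpha>"
  then obtain p1 q1 p2 q2 where
    x: "x = poly p1 \<alpha> / poly q1 \<alpha>" "poly_over K p1" "poly_over K q1" "poly q1 \<alpha> \<noteq> 0" and
    y: "y = poly p2 \<alpha> / poly q2 \<alpha>" "poly_over K p2" "poly_over K q2" "poly q2 \<alpha> \<noteq> 0"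
    unfolding simple_ext_def by blast
  have nz: "?ev q1 \<noteq> 0" "?ev q2 \<noteq> 0"
    using poly_map_nonzero_at_conjugate[OF K \<sigma> mp \<beta>] x y by auto
  have sum: "x + y = poly (p1 * q2 + p2 * q1) \<alpha> / poly (q1 * q2) \<alpha>"
    and prod: "x * y = poly (p1 * p2) \<alpha> / poly (q1 * q2) \<alpha>"
    using x(4) y(4) by (simp_all add: x(1) y(1) field_simps)
  have "ext_hom K \<sigma> \<alpha> \<beta> (x + y) = ?ev (p1 * q2 + p2 * q1) / ?ev (q1 * q2)"
    "ext_hom K \<sigma> \<alpha> \<beta> (x * y) = ?ev (p1 * p2) / ?ev (q1 * q2)"
    unfolding sum prod using x y
    by (intro ext_hom_fraction poly_over_add[OF K_subring] poly_over_mult[OF K_subring]; simp)+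
  then show "ext_hom K \<sigma> \<alpha> \<beta> (x + y) = ext_hom K \<sigma> \<alpha> \<beta> x + ext_hom K \<sigma> \<alpha> \<beta> y"
    "ext_hom K \<sigma> \<alpha> \<beta> (x * y) = ext_hom K \<sigma> \<alpha> \<beta> x * ext_hom K \<sigma> \<alpha> \<beta> y"
    using x y nz by (simp_all add: ext_hom_fraction eval_add eval_mult poly_over_mult[OF K_subring] add_frac_eq)
qed

end

lemma hom_on_extend_algebraic:
  fixes K :: "'a::field_char_0 set" and \<sigma> :: "'a \<Rightarrow> complex"
  assumes "finite S" "\<forall>x\<in>S. algebraic x" "is_subfield K" "hom_on K \<sigma>"
  shows "\<exists>K' \<sigma>'. is_subfield K' \<and> hom_on K' \<sigma>' \<and> K \<subseteq> K' \<and> S \<subseteq> K' \<and> (\<forall>x\<in>K. \<sigma>' x = \<sigma> x)"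
  using assms
proof (induction S arbitrary: K \<sigma> rule: finite_induct)
  case empty
  then show ?case by blast
next
  case (insert x S)
  note K = insert.prems(2) and \<sigma> = insert.prems(3)
  obtain p where p: "\<forall>i. coeff p i \<in> \<rat>" "p \<noteq> 0" "poly p x = 0"
    using insert.prems(1) unfolding algebraic_altdef by blast
  then have "poly_over K p" using Rats_subset_subfield[OF K] by (auto simp: poly_over_def)
  then obtain mp where mp: "is_min_poly K x mp" using min_poly_exists p(2,3) by blast
  then have "degree (map_poly \<sigma> mp) \<noteq> 0"
    using degree_map_poly_hom_on[OF K \<sigma>] min_poly_degree_pos[OF mp] by (simp add: is_min_poly_def)
  then obtain \<beta> where \<beta>: "poly (map_poly \<sigma> mp) \<beta> = 0"
    using fundamental_theorem_of_algebra constant_degree by metis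
  let ?K = "simple_ext K x" and ?\<sigma> = "ext_hom K \<sigma> x \<beta>"
  have K1: "is_subfield ?K" "K \<subseteq> ?K" "x \<in> ?K"
    using subfield_is_subring[OF K] by (simp_all add: is_subfield_simple_ext subset_simple_ext mem_simple_ext)
  have \<sigma>1: "hom_on ?K ?\<sigma>" "\<forall>y\<in>K. ?\<sigma> y = \<sigma> y"
    by (simp_all add: hom_on_ext_hom[OF K \<sigma> mp \<beta>] ext_hom_extends[OF K \<sigma> mp \<beta>])
  obtain K' \<sigma>' where "is_subfield K'" "hom_on K' \<sigma>'" "?K \<subseteq> K'" "S \<subseteq> K'" "\<forall>y\<in>?K. \<sigma>' y = ?\<sigma> y"
    using insert.IH[OF _ K1(1) \<sigma>1(1)] insert.prems(1) by auto
  then show ?case using K1 \<sigma>1 by (intro exI[of _ K'] exI[of _ \<sigma>']) auto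
qed

lemma conjugate_hom_on:
  fixes z w :: complex
  assumes mp: "is_min_poly \<rat> z mp" and w: "poly mp w = 0" and S: "finite S" "\<forall>x\<in>S. algebraic x"
  shows "\<exists>K \<sigma>. is_subfield K \<and> hom_on K \<sigma> \<and> z \<in> K \<and> S \<subseteq> K \<and> \<sigma> z = w"
proof -
  have w': "poly (map_poly id mp) w = 0" using w by (simp add: map_poly_id)
  let ?K = "simple_ext \<rat> z" and ?\<sigma> = "ext_hom \<rat> id z w"
  have Q: "is_subring (\<rat> :: complex set)" using subfield_is_subring[OF is_subfield_Rats] .
  have "is_subfield ?K" "hom_on ?K ?\<sigma>" "z \<in> ?K" "?\<sigma> z = w"
    using is_subfield_simple_ext[OF Q] mem_simple_ext[OF Q] hom_on_ext_hom[OF is_subfield_Rats hom_on_id mp w']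
      ext_hom_root[OF is_subfield_Rats hom_on_id mp w'] by simp_all
  with hom_on_extend_algebraic[OF S] show ?thesis by (metis subsetD)
qed

section \<open>Kronecker's theorem\<close>

lemma lagrange_basis:
  fixes U :: "'a::field set"
  assumes U: "finite U"
  obtains L where "\<And>u. u \<in> U \<Longrightarrow> degree (L u) < card U"
    "\<And>u v. u \<in> U \<Longrightarrow> v \<in> U \<Longrightarrow> poly (L u) v = (if v = u then 1 else 0)"
proof
  define L where "L u = smult (inverse (\<Prod>v\<in>U-{u}. u - v)) (\<Prod>v\<in>U-{u}. [:-v, 1:])" for u
  show "degree (L u) < card U" if "u \<in> U" for u
  proof -
    have "degree (L u) \<le> degree (\<Prod>v\<in>U-{u}. [:-v, 1:])" unfolding L_def by (rule degree_smult_le)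
    also have "\<dots> = card (U - {u})" by (subst degree_prod_sum_eq) auto
    also have "\<dots> < card U"
      using U that card_gt_0_iff[of U] by (auto simp: card_Diff_singleton)
    finally show ?thesis .
  qed
  show "poly (L u) v = (if v = u then 1 else 0)" if "u \<in> U" "v \<in> U" for u v
  proof (cases "v = u")
    case True
    have "(\<Prod>w\<in>U-{u}. u - w) \<noteq> 0" using U by (simp add: prod_zero_iff)
    then show ?thesis using True by (simp add: L_def poly_prod)
  next
    case False
    then have "(\<Prod>w\<in>U-{u}. poly [:-w, 1:] v) = 0" using U that by (simp add: prod_zero_iff)
    then show ?thesis using False by (simp add: L_def poly_prod)
  qed
qed

lemma lagrange_interpolation:
  fixes U :: "'a::field set"
  assumes U: "finite U" and L: "\<And>u. u \<in> U \<Longrightarrow> degree (L u) < card U"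
    "\<And>u v. u \<in> U \<Longrightarrow> v \<in> U \<Longrightarrow> poly (L u) v = (if v = u then 1 else 0)"
    and f: "degree f < card U"
  shows "f = (\<Sum>u\<in>U. smult (poly f u) (L u))"
proof (rule poly_eqI_degree[of U])
  show "degree (\<Sum>u\<in>U. smult (poly f u) (L u)) < card U"
    using L(1) f by (intro degree_sum_less) (auto intro: le_less_trans[OF degree_smult_le])
  show "poly f v = poly (\<Sum>u\<in>U. smult (poly f u) (L u)) v" if "v \<in> U" for v
    using U that by (simp add: poly_sum L(2) if_distrib cong: if_cong)
qed (use f in auto)

lemma interpolation_coeff_bound:
  fixes U :: "'a::real_normed_field set"
  assumes U: "finite U"
  shows "\<exists>B. \<forall>f i. degree f < card U \<longrightarrow> (\<forall>u\<in>U. norm (poly f u) \<le> 1) \<longrightarrow> norm (coeff f i) \<le> B"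
proof -
  obtain L where L: "\<And>u. u \<in> U \<Longrightarrow> degree (L u) < card U"
    "\<And>u v. u \<in> U \<Longrightarrow> v \<in> U \<Longrightarrow> poly (L u) v = (if v = u then 1 else 0)"
    using lagrange_basis[OF U] by blast
  define B where "B = (\<Sum>u\<in>U. \<Sum>j<card U. norm (coeff (L u) j))"
  have "norm (coeff f i) \<le> B" if f: "degree f < card U" "\<forall>u\<in>U. norm (poly f u) \<le> 1" for f i
  proof (cases "i < card U")
    case False
    then have "coeff f i = 0" using f(1) by (simp add: coeff_eq_0)
    then show ?thesis by (simp add: B_def sum_nonneg)
  next
    case True
    have f_eq: "f = (\<Sum>u\<in>U. smult (poly f u) (L u))" using lagrange_interpolation[OF U L f(1)] .
    have "norm (coeff f i) = norm (\<Sum>u\<in>U. poly f u * coeff (L u) i)"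
      by (subst f_eq) (simp add: coeff_sum)
    also have "\<dots> \<le> (\<Sum>u\<in>U. norm (poly f u) * norm (coeff (L u) i))"
      by (rule order.trans[OF norm_sum]) (simp add: norm_mult)
    also have "\<dots> \<le> B"
      unfolding B_def
    proof (intro sum_mono)
      fix u assume "u \<in> U"
      then have "norm (poly f u) * norm (coeff (L u) i) \<le> norm (coeff (L u) i)"
        using f(2) by (simp add: mult_left_le_one_le)
      also have "\<dots> \<le> (\<Sum>j<card U. norm (coeff (L u) j))"
        using True by (intro member_le_sum) auto
      finally show "norm (poly f u) * norm (coeff (L u) i) \<le> (\<Sum>j<card U. norm (coeff (L u) j))" .
    qed
    finally show ?thesis .
  qed
  then show ?thesis by blast
qed

lemma card_roots_rsquarefree:
  fixes p :: "complex poly"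
  assumes "rsquarefree p"
  shows "card {x. poly p x = 0} = degree p"
proof -
  have "p \<noteq> 0" using assms by (simp add: rsquarefree_def)
  have "degree p = degree (smult (lead_coeff p) (\<Prod>x | poly p x = 0. [:-x, 1:]))"
    using complex_poly_decompose_rsquarefree[OF assms] by simp
  also have "\<dots> = (\<Sum>x | poly p x = 0. degree [:-x, 1:])"
    using \<open>p \<noteq> 0\<close> by (simp add: degree_prod_sum_eq)
  finally show ?thesis by simp
qed

lemma common_denominator:
  fixes C :: "'a::field_char_0 set"
  assumes "finite C" "C \<subseteq> \<rat>"
  shows "\<exists>D::int. D > 0 \<and> (\<forall>c\<in>C. of_int D * c \<in> \<int>)"
  using assms
proof (induction C rule: finite_induct)
  case empty
  then show ?case by (intro exI[of _ 1]) auto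
next
  case (insert c C)
  then obtain D :: int where D: "D > 0" "\<forall>x\<in>C. of_int D * x \<in> \<int>" by auto
  from insert.prems obtain a b :: int where ab: "b > 0" "c = of_int a / of_int b"
    by (auto elim!: Rats_cases')
  have "of_int (D * b) * x \<in> \<int>" if "x \<in> C" for x
  proof -
    have "of_int (D * b) * x = of_int b * (of_int D * x)" by simp
    also have "\<dots> \<in> \<int>" using Ints_mult[OF Ints_of_int D(2)[rule_format, OF that]] .
    finally show ?thesis .
  qed
  moreover have "of_int (D * b) * c = of_int (D * a)" using ab by simp
  ultimately show ?case using D ab by (intro exI[of _ "D * b"]) auto
qed

lemma finite_bounded_denominator:
  fixes D :: int
  assumes "D > 0"
  shows "finite {c :: 'a::real_normed_field. of_int D * c \<in> \<int> \<and> norm c \<le> B}"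
proof -
  define M where "M = \<lceil>of_int D * B\<rceil>"
  have "{c :: 'a. of_int D * c \<in> \<int> \<and> norm c \<le> B} \<subseteq> (\<lambda>m. of_int m / of_int D) ` {-M..M}"
  proof
    fix c :: 'a assume c: "c \<in> {c. of_int D * c \<in> \<int> \<and> norm c \<le> B}"
    then obtain m where m: "of_int D * c = of_int m" by (auto elim!: Ints_cases)
    have "\<bar>real_of_int m\<bar> = of_int D * norm c"
      using arg_cong[OF m, of norm] assms by (simp add: norm_mult)
    also have "\<dots> \<le> of_int D * B" using c assms by (intro mult_left_mono) auto
    finally have "\<bar>m\<bar> \<le> M" unfolding M_def by linarith
    moreover have "c = of_int m / of_int D" using m assms by (simp add: field_simps)
    ultimately show "c \<in> (\<lambda>m. of_int m / of_int D) ` {-M..M}" by (auto simp: abs_le_iff)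
  qed
  then show ?thesis by (rule finite_subset) auto
qed

lemma finite_polys_degree_less:
  assumes "finite G"
  shows "finite {p. degree p < n \<and> (\<forall>i. coeff p i \<in> G)}"
proof -
  let ?S = "{p. degree p < n \<and> (\<forall>i. coeff p i \<in> G)}"
  have inj: "inj_on (\<lambda>p. restrict (coeff p) {..<n}) ?S"
  proof (rule inj_onI)
    fix p q assume pq: "p \<in> ?S" "q \<in> ?S" and eq: "restrict (coeff p) {..<n} = restrict (coeff q) {..<n}"
    show "p = q"
    proof (rule poly_eqI)
      fix i
      show "coeff p i = coeff q i"
      proof (cases "i < n")
        case True
        then show ?thesis using fun_cong[OF eq, of i] by simp
      next
        case False
        then show ?thesis using pq by (simp add: coeff_eq_0)
      qed
    qed
  qed
  have "(\<lambda>p. restrict (coeff p) {..<n}) ` ?S \<subseteq> PiE {..<n} (\<lambda>_. G)"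
    by (intro image_subsetI) (simp only: restrict_PiE_iff mem_Collect_eq, simp)
  moreover have "finite (PiE {..<n} (\<lambda>_. G))" using assms by (simp add: finite_PiE)
  ultimately have "finite ((\<lambda>p. restrict (coeff p) {..<n}) ` ?S)" by (rule finite_subset)
  then show ?thesis using inj by (rule finite_imageD)
qed

lemma poly_eq_sum_lessThan:
  fixes x :: "'a::comm_semiring_1"
  assumes "degree p < n"
  shows "poly p x = (\<Sum>i<n. coeff p i * x ^ i)"
proof -
  have "(\<Sum>i<n. coeff p i * x ^ i) = (\<Sum>i\<le>degree p. coeff p i * x ^ i)"
    using assms by (intro sum.mono_neutral_right) (auto simp: coeff_eq_0)
  then show ?thesis by (simp add: poly_altdef)
qed

text \<open>Reducing \<open>x ^ k\<close> first modulo the monic integer polynomial \<open>P\<close> shows that each remainder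
  \<open>R k\<close> modulo the minimal polynomial is an integer combination of \<open>R 0, \<dots>, R (degree P - 1)\<close>.\<close>

lemma remainders_common_denominator:
  fixes z :: "'a::field_char_0"
  assumes P: "poly_over \<int> P" "lead_coeff P = 1" "poly P z = 0"
    and mp: "is_min_poly \<rat> z mp"
    and R: "\<And>k. poly_over \<rat> (R k)" "\<And>k. degree (R k) < degree mp" "\<And>k. poly (R k) z = z ^ k"
  shows "\<exists>D::int. D > 0 \<and> (\<forall>k i. of_int D * coeff (R k) i \<in> \<int>)"
proof -
  define d where "d = degree P"
  have "degree P \<noteq> 0"
  proof
    assume "degree P = 0"
    then obtain c where "P = [:c:]" by (rule degree_eq_zeroE)
    then show False using P(2,3) by simp
  qed
  then have "\<exists>s. poly_over \<int> s \<and> degree s < d \<and> poly s z = z ^ k" for k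
    using poly_over_power_remainder[OF is_subring_Ints P(1) Ints_1, of k] P(2,3) by (auto simp: d_def)
  then obtain S where S: "\<And>k. poly_over \<int> (S k)" "\<And>k. degree (S k) < d" "\<And>k. poly (S k) z = z ^ k"
    by metis
  have S_Rats: "coeff (S k) j \<in> \<rat>" for k j
    using S(1) Ints_subset_Rats by (auto simp: poly_over_def)
  have R_comb: "R k = (\<Sum>j<d. smult (coeff (S k) j) (R j))" for k
  proof (rule min_poly_unique_remainder[OF is_subfield_Rats mp R(1) _ R(2)])
    show "poly_over \<rat> (\<Sum>j<d. smult (coeff (S k) j) (R j))"
      using R(1) S_Rats by (intro poly_over_sum poly_over_smult subfield_is_subring[OF is_subfield_Rats])
    show "degree (\<Sum>j<d. smult (coeff (S k) j) (R j)) < degree mp"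
      using R(2) min_poly_degree_pos[OF mp]
      by (intro degree_sum_less) (auto intro: le_less_trans[OF degree_smult_le])
    have "poly (\<Sum>j<d. smult (coeff (S k) j) (R j)) z = (\<Sum>j<d. coeff (S k) j * z ^ j)"
      by (simp add: poly_sum R(3))
    also have "\<dots> = z ^ k" using poly_eq_sum_lessThan[OF S(2)] S(3) by simp
    finally show "poly (R k) z = poly (\<Sum>j<d. smult (coeff (S k) j) (R j)) z" using R(3) by simp
  qed
  define C where "C = {coeff (R j) i | j i. j < d \<and> i \<le> degree mp}"
  have "finite C" unfolding C_def by (rule finite_image_set2) auto
  moreover have "C \<subseteq> \<rat>" using R(1) by (auto simp: C_def poly_over_def)
  ultimately obtain D :: int where D: "D > 0" "\<forall>c\<in>C. of_int D * c \<in> \<int>"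
    using common_denominator by blast
  have D_R: "of_int D * coeff (R j) i \<in> \<int>" if "j < d" for j i
  proof (cases "i \<le> degree mp")
    case True
    then show ?thesis using D(2) that by (auto simp: C_def)
  next
    case False
    then show ?thesis using R(2)[of j] by (simp add: coeff_eq_0)
  qed
  have "of_int D * coeff (R k) i \<in> \<int>" for k i
  proof -
    have "of_int D * coeff (R k) i = (\<Sum>j<d. coeff (S k) j * (of_int D * coeff (R j) i))"
      by (subst R_comb) (simp add: coeff_sum sum_distrib_left mult_ac)
    also have "\<dots> \<in> \<int>"
      using S(1) by (auto simp: poly_over_def intro!: Ints_sum Ints_mult[OF _ D_R])
    finally show ?thesis .
  qed
  then show ?thesis using D(1) by blast
qed

text \<open>The remainders of \<open>x ^ k\<close> modulo the minimal polynomial have coefficients that are bounded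
  (by interpolation at the conjugates) and have a common denominator, so two of them coincide.\<close>

theorem Kronecker_root_of_unity:
  fixes z :: complex
  assumes P: "poly_over \<int> P" "lead_coeff P = 1" "poly P z = 0" and "z \<noteq> 0"
    and mp: "is_min_poly \<rat> z mp" and disc: "\<And>u. poly mp u = 0 \<Longrightarrow> norm u \<le> 1"
  shows "\<exists>k>0. z ^ k = 1"
proof -
  let ?U = "{u. poly mp u = 0}"
  have Q: "is_subring (\<rat> :: complex set)" using subfield_is_subring[OF is_subfield_Rats] .
  have mp_Q: "poly_over \<rat> mp" "mp \<noteq> 0" using mp by (auto simp: is_min_poly_def)
  have card_U: "card ?U = degree mp"
    using card_roots_rsquarefree[OF rsquarefree_min_poly[OF is_subfield_Rats mp]] .
  obtain B where B: "\<And>f i. degree f < card ?U \<Longrightarrow> (\<forall>u\<in>?U. norm (poly f u) \<le> 1) \<Longrightarrow> norm (coeff f i) \<le> B"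
    using interpolation_coeff_bound[OF poly_roots_finite[OF mp_Q(2)]] by blast
  have "\<forall>k. \<exists>r. poly_over \<rat> r \<and> degree r < degree mp \<and> (\<forall>x. poly mp x = 0 \<longrightarrow> poly r x = x ^ k)"
    using poly_over_power_remainder[OF Q mp_Q(1)] subfield_lead_coeff_unit[OF is_subfield_Rats mp_Q]
      min_poly_degree_pos[OF mp] by blast
  then obtain R where R: "\<And>k. poly_over \<rat> (R k)" "\<And>k. degree (R k) < degree mp"
    "\<And>k x. poly mp x = 0 \<Longrightarrow> poly (R k) x = x ^ k"
    by metis
  have "poly mp z = 0" using mp by (simp add: is_min_poly_def)
  then have Rz: "poly (R k) z = z ^ k" for k by (rule R(3))
  obtain D :: int where D: "D > 0" "\<And>k i. of_int D * coeff (R k) i \<in> \<int>"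
    using remainders_common_denominator[OF P mp R(1,2) Rz] by blast
  have "norm (coeff (R k) i) \<le> B" for k i
    using R(2,3) disc card_U by (intro B) (auto simp: norm_power power_le_one)
  then have "range R \<subseteq> {p. degree p < degree mp \<and> (\<forall>i. coeff p i \<in> {c. of_int D * c \<in> \<int> \<and> norm c \<le> B})}"
    using R(2) D(2) by auto
  then have "finite (range R)"
    using finite_polys_degree_less[OF finite_bounded_denominator[OF D(1)]] by (rule finite_subset)
  then have "\<not> inj R" using finite_imageD infinite_UNIV_nat by blast
  then obtain k l where "k < l" "R k = R l" unfolding inj_def by (metis linorder_neqE_nat)
  then have "z ^ k * z ^ (l - k) = z ^ k * 1"
    using Rz by (metis mult_1_right power_add le_add_diff_inverse less_imp_le)
  then show ?thesis using \<open>z \<noteq> 0\<close> \<open>k < l\<close> by (intro exI[of _ "l - k"]) simp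
qed

section \<open>Counting roots off the unit circle\<close>

lemma card_le_roots_off_unit_circle:
  fixes P :: "complex poly"
  assumes "P \<noteq> 0" "finite W" "0 \<notin> W"
    and ratio: "\<And>x y. x \<in> W \<Longrightarrow> y \<in> W \<Longrightarrow> x \<noteq> y \<Longrightarrow> poly P (x / y) = 0"
    and "u \<in> W" "v \<in> W" "norm u \<noteq> norm v"
  shows "card W \<le> card {x. poly P x = 0 \<and> norm x \<noteq> 1}"
proof -
  have ne: "norm ` W \<noteq> {}" using assms(5) by blast
  obtain a where a: "a \<in> W" "norm a = Min (norm ` W)" using Min_in[OF _ ne] assms(2) by auto
  obtain b where b: "b \<in> W" "norm b = Max (norm ` W)" using Max_in[OF _ ne] assms(2) by auto
  have a_le: "norm a \<le> norm x" and le_b: "norm x \<le> norm b" if "x \<in> W" for x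
    using that a b assms(2) by simp_all
  have "norm a < norm b"
  proof (rule ccontr)
    assume "\<not> norm a < norm b"
    then have "norm x = norm a" if "x \<in> W" for x using a_le[OF that] le_b[OF that] by linarith
    then show False using assms(5-7) by simp
  qed
  have "a \<noteq> 0" "b \<noteq> 0" using a(1) b(1) assms(3) by auto
  define I where "I = {x \<in> W. norm a < norm x}"
  define J where "J = {x \<in> W. norm x = norm a}"
  let ?roots = "{x. poly P x = 0 \<and> norm x \<noteq> 1}"
  have outer: "(\<lambda>x. x / a) ` I \<subseteq> {x. poly P x = 0 \<and> norm x > 1}"
    using ratio a(1) \<open>a \<noteq> 0\<close> by (auto simp: I_def norm_divide)
  have inner: "(\<lambda>x. x / b) ` J \<subseteq> {x. poly P x = 0 \<and> norm x < 1}"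
    using ratio b(1) \<open>b \<noteq> 0\<close> \<open>norm a < norm b\<close> by (fastforce simp: J_def norm_divide)
  have W_eq: "W = I \<union> J" using a_le by (force simp: I_def J_def order.order_iff_strict)
  have "card W = card I + card J"
    unfolding W_eq using assms(2) by (intro card_Un_disjoint) (auto simp: I_def J_def)
  also have "\<dots> = card ((\<lambda>x. x / a) ` I) + card ((\<lambda>x. x / b) ` J)"
    using \<open>a \<noteq> 0\<close> \<open>b \<noteq> 0\<close> by (simp add: card_image inj_on_def)
  also have "\<dots> = card ((\<lambda>x. x / a) ` I \<union> (\<lambda>x. x / b) ` J)"
  proof (rule card_Un_disjoint[symmetric])
    show "finite ((\<lambda>x. x / a) ` I)" "finite ((\<lambda>x. x / b) ` J)"
      using assms(2) by (simp_all add: I_def J_def)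
    show "(\<lambda>x. x / a) ` I \<inter> (\<lambda>x. x / b) ` J = {}" using outer inner by fastforce
  qed
  also have "\<dots> \<le> card ?roots"
    using outer inner poly_roots_finite[OF assms(1)] by (intro card_mono) (auto elim: finite_subset[rotated])
  finally show ?thesis .
qed

lemma card_ratio_set_le_roots_off_unit_circle:
  fixes P :: "complex poly"
  assumes P: "poly_over \<int> P" "lead_coeff P = 1"
    and Z: "finite Z" "0 \<notin> Z" "1 \<in> Z"
    and ratio: "\<And>x y. x \<in> Z \<Longrightarrow> y \<in> Z \<Longrightarrow> x \<noteq> y \<Longrightarrow> poly P (x / y) = 0"
    and z: "z \<in> Z" "\<And>k. k > 0 \<Longrightarrow> z ^ k \<noteq> 1"
  shows "card Z \<le> card {x. poly P x = 0 \<and> norm x \<noteq> 1}"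
proof -
  have "P \<noteq> 0" using P(2) by auto
  have P_Q: "poly_over \<rat> P"
    using poly_over_mono[OF Ints_subset_Rats P(1)] .
  have root_Z: "poly P x = 0" if "x \<in> Z" "x \<noteq> 1" for x using ratio[OF that(1) Z(3) that(2)] by simp
  have "z \<noteq> 1" using z(2)[of 1] by auto
  then have Pz: "poly P z = 0" using root_Z z(1) by blast
  obtain mp where mp: "is_min_poly \<rat> z mp" using min_poly_exists[OF P_Q \<open>P \<noteq> 0\<close> Pz] by blast
  obtain w where w: "poly mp w = 0" "norm w > 1"
    using Kronecker_root_of_unity[OF P Pz _ mp] z Z(2) by (metis not_le)
  let ?S = "{x. poly P x = 0}"
  have "finite ?S" "\<forall>x\<in>?S. algebraic x"
    using poly_roots_finite[OF \<open>P \<noteq> 0\<close>] P(1) \<open>P \<noteq> 0\<close> by (auto simp: poly_over_def intro: algebraicI)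
  then obtain K \<sigma> where K: "is_subfield K" "hom_on K \<sigma>" "?S \<subseteq> K" "\<sigma> z = w"
    using conjugate_hom_on[OF mp w(1)] by blast
  have Z_K: "Z \<subseteq> K" using root_Z K(3) subring_1[OF subfield_is_subring[OF K(1)]] by blast
  have "card Z = card (\<sigma> ` Z)" using inj_on_subset[OF hom_on_inj[OF K(1,2)] Z_K] by (simp add: card_image)
  also have "\<dots> \<le> card {x. poly P x = 0 \<and> norm x \<noteq> 1}"
  proof (rule card_le_roots_off_unit_circle[where u = 1 and v = w])
    show "finite (\<sigma> ` Z)" "0 \<notin> \<sigma> ` Z" "P \<noteq> 0"
      using Z Z_K hom_on_eq_0_iff[OF K(1,2)] \<open>P \<noteq> 0\<close> by auto
    show "1 \<in> \<sigma> ` Z" "w \<in> \<sigma> ` Z"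
      using Z(3) z(1) K(4) hom_on_1[OF subfield_is_subring[OF K(1)] K(2)] by (auto intro: image_eqI)
    show "norm (1 :: complex) \<noteq> norm w" using w(2) by simp
  next
    fix x y assume "x \<in> \<sigma> ` Z" "y \<in> \<sigma> ` Z" "x \<noteq> y"
    then obtain x' y' where "x' \<in> Z" "y' \<in> Z" "x' \<noteq> y'" "x = \<sigma> x'" "y = \<sigma> y'" by blast
    moreover from this have "x' / y' \<in> K" using root_Z ratio K(3) by blast
    ultimately show "poly P (x / y) = 0"
      using Z_K ratio hom_on_divide[OF K(1,2)] hom_on_poly_Rats[OF K(1,2) P_Q]
        hom_on_0[OF subfield_is_subring[OF K(1)] K(2)] by (metis subsetD)
  qed
  finally show ?thesis .
qed

lemma coeff_set_poly: "finite A \<Longrightarrow> coeff (set_poly A) i = (if i \<in> A then 1 else 0)"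
  by (simp add: set_poly_def coeff_sum coeff_monom)

lemma poly_set_poly: "poly (set_poly A) x = (\<Sum>a\<in>A. x ^ a)"
  by (simp add: set_poly_def poly_sum poly_monom)

lemma poly_over_Ints_set_poly: "finite A \<Longrightarrow> poly_over \<int> (set_poly A)"
  by (simp add: poly_over_def coeff_set_poly)

lemma lead_coeff_set_poly:
  assumes "finite A" "A \<noteq> {}"
  shows "lead_coeff (set_poly A) = 1"
proof -
  have "coeff (set_poly A) (Max A) = 1" using assms by (simp add: coeff_set_poly)
  moreover have "degree (set_poly A) = Max A"
    using assms calculation by (intro antisym degree_le le_degree) (auto simp: coeff_set_poly)
  ultimately show ?thesis by simp
qed

lemma cis_power_eq_1_imp_Rats:
  assumes "cis (2 * pi * t) ^ k = 1" "k > 0"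
  shows "t \<in> \<rat>"
proof -
  have "cis (real k * (2 * pi * t)) = 1" using assms(1) by (simp add: Complex.DeMoivre)
  then have "cos (real k * (2 * pi * t)) = 1" by (metis cis.sel(1) one_complex.sel(1))
  then obtain m :: int where "real k * (2 * pi * t) = of_int m * 2 * pi"
    using cos_one_2pi_int by blast
  then have "t = of_int m / real k" using assms(2) by (simp add: field_simps)
  then show ?thesis by simp
qed

lemma spectrum_ratio_set:
  fixes \<theta> :: "nat \<Rightarrow> real"
  assumes "finite A" "0 \<in> A" "is_spectrum A \<theta>"
  defines "z \<equiv> \<lambda>j. cis (2 * pi * (\<theta>(0 := 0)) j)"
  shows "card (z ` {..<card A}) = card A"
    and "\<And>x y. x \<in> z ` {..<card A} \<Longrightarrow> y \<in> z ` {..<card A} \<Longrightarrow> x \<noteq> y \<Longrightarrow>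
           poly (set_poly A) (x / y) = 0"
proof -
  have ratio: "poly (set_poly A) (z i / z j) = 0" if "i < card A" "j < card A" "i \<noteq> j" for i j
    using assms(3) that by (simp add: is_spectrum_def Let_def z_def cis_divide right_diff_distrib)
  then show "\<And>x y. x \<in> z ` {..<card A} \<Longrightarrow> y \<in> z ` {..<card A} \<Longrightarrow> x \<noteq> y \<Longrightarrow>
      poly (set_poly A) (x / y) = 0"
    by blast
  have "poly (set_poly A) 1 \<noteq> 0" using assms(1,2) by (auto simp: poly_set_poly)
  moreover have "z j \<noteq> 0" for j by (simp add: z_def)
  ultimately have "inj_on z {..<card A}" using ratio by (intro inj_onI) (metis divide_self lessThan_iff)
  then show "card (z ` {..<card A}) = card A" by (simp add: card_image)
qed

theorem mainTheorem10:
  fixes A :: "nat set" and \<theta> :: "nat \<Rightarrow> real"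
  assumes "finite A" and "0 \<in> A" and "card A \<ge> 2"
    and "is_spectrum A \<theta>"
    and "\<theta> 1 \<notin> \<rat>"
  shows "card {x :: complex. poly (set_poly A) x = 0 \<and> norm x \<noteq> 1} \<ge> card A - 1"
proof -
  define z where "z j = cis (2 * pi * (\<theta>(0 := 0)) j)" for j
  let ?Z = "z ` {..<card A}"
  have P: "poly_over \<int> (set_poly A)" "lead_coeff (set_poly A) = 1"
    using poly_over_Ints_set_poly[OF assms(1)] lead_coeff_set_poly[OF assms(1)] assms(2) by blast+
  have z: "z 0 = 1" "z 1 = cis (2 * pi * \<theta> 1)" "0 \<notin> ?Z" by (auto simp: z_def)
  moreover have "0 \<in> {..<card A}" "1 \<in> {..<card A}" using assms(3) by auto
  ultimately have Z: "finite ?Z" "0 \<notin> ?Z" "1 \<in> ?Z" "z 1 \<in> ?Z" by (auto intro: rev_image_eqI)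
  have "\<And>k. k > 0 \<Longrightarrow> z 1 ^ k \<noteq> 1"
    using cis_power_eq_1_imp_Rats[of "\<theta> 1"] assms(5) z(2) by auto
  then have "card ?Z \<le> card {x. poly (set_poly A) x = 0 \<and> norm x \<noteq> 1}"
    using card_ratio_set_le_roots_off_unit_circle[OF P Z(1-3) _ Z(4)]
      spectrum_ratio_set(2)[OF assms(1,2,4)] unfolding z_def by blast
  then show ?thesis using spectrum_ratio_set(1)[OF assms(1,2,4)] unfolding z_def by simp
qed

end
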